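(* Let $\phi_*\in(0,\pi/2)$, $\delta_*=\min\{\phi_*,\tfrac\pi2-\phi_*\}$, and $R\ge\max\{\frac{34r}{\phi_*},\frac{14.6r}{\delta_*\sin\phi_*}\}$. For the billiard map on $Q(\phi_*,R)$ and any $x\in M_r$ for which $x_0,x_1,x_2$ are defined, if $d_1<2r$ then $x_0\in V(\delta_* )$ and $x_2\in U(\delta_* )$.
   Context: Setting: $r=1$, $\phi_*\in(0,\pi/2)$, $Q(\phi_*,R)=D(O_r,r)\cap D(O_R,R)$ with $|O_rO_R|=\sqrt{R^2-r^2\sin^2\phi_*}-r\cos\phi_*$; boundary arcs $\Gamma_r$ (position angles $\phi\in[\phi_*,2\pi-\phi_*]$ about $O_r$, measured counterclockwise from $\overrightarrow{O_RO_r}$) and $\Gamma_R$ (angles in $(-\Phi_*,\Phi_* )$ about $O_R$, $R\sin\Phi_*=r\sin\phi_*$). Phase space $M=M_r\sqcup M_R$, coordinates $(\phi,\theta)$, $\theta\in(0,\pi)$ the angle from the positive tangent direction; $F$ the billiard map. $M_r^{in}=M_r\cap F(M_R)$, $M_r^{out}=M_r\cap F^{-1}(M_R)$, $M_R^{out}=M_R\cap F^{-1}(M_r)$. Notation for $x\in M_r$: $n_0=\inf\{n\ge0:F^nx\in M_r^{out}\}$, $x_0=(\phi_0,\theta_0)=F^{n_0}x$, $x_1=(\phi_1,\theta_1)=Fx_0\in M_R$, $n_1=\inf\{n\ge0:F^nx_1\in M_R^{out}\}$, $x_2=(\phi_2,\theta_2)=F^{n_1+1}x_1\in M_r^{in}$;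 $d_0=r\sin\theta_0$, $d_1=R\sin\theta_1$, $d_2=r\sin\theta_2$. With $x_*=(2\pi-\phi_*,\phi_* )$, $y_*=(\phi_*,\pi-\phi_* )$, $I(\phi,\theta)=(\phi,\pi-\theta)$ and Euclidean balls $B(z,\delta)$ in $(\phi,\theta)$ coordinates: $V(\delta)=(B(x_*,\delta)\cup B(y_*,\delta))\cap M_r^{out}$, $U(\delta)=(B(Ix_*,\delta)\cup B(Iy_*,\delta))\cap M_r^{in}$. *)

theory Defs
  imports "HOL-Analysis.Analysis"
begin

text \<open>Billiard in Q(phi_s,R) with r = 1. Points of the plane are complex numbers;
 O_R = 0 and O_r = ctr (a positive real), so the direction O_R -> O_r is the positive real axis.\<close>

datatype arc = ArcSmall | ArcBig

type_synonym phpt = "arc \<times> real \<times> real"  \<comment> \<open>(arc, position angle, theta)\<close>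

definition ctr :: "real \<Rightarrow> real \<Rightarrow> real" where
  "ctr ps R = sqrt (R\<^sup>2 - (sin ps)\<^sup>2) - cos ps"

definition PhiS :: "real \<Rightarrow> real \<Rightarrow> real" where
  "PhiS ps R = arcsin (sin ps / R)"

fun inM :: "real \<Rightarrow> real \<Rightarrow> phpt \<Rightarrow> bool" where
  "inM ps R (ArcSmall, phi, th) \<longleftrightarrow> ps \<le> phi \<and> phi \<le> 2*pi - ps \<and> 0 < th \<and> th < pi"
| "inM ps R (ArcBig, phi, th) \<longleftrightarrow> - PhiS ps R < phi \<and> phi < PhiS ps R \<and> 0 < th \<and> th < pi"

definition Mr :: "real \<Rightarrow> real \<Rightarrow> phpt set" where
  "Mr ps R = {x. fst x = ArcSmall \<and> inM ps R x}"

definition MR :: "real \<Rightarrow> real \<Rightarrow> phpt set" where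
  "MR ps R = {x. fst x = ArcBig \<and> inM ps R x}"

definition M :: "real \<Rightarrow> real \<Rightarrow> phpt set" where
  "M ps R = Mr ps R \<union> MR ps R"

fun pos :: "real \<Rightarrow> real \<Rightarrow> phpt \<Rightarrow> complex" where
  "pos ps R (ArcSmall, phi, th) = complex_of_real (ctr ps R) + cis phi"
| "pos ps R (ArcBig, phi, th) = complex_of_real R * cis phi"

definition tng :: "phpt \<Rightarrow> complex" where
  "tng x = \<i> * cis (fst (snd x))"

text \<open>Unit direction making angle theta with the positive tangent (towards the inside).\<close>
definition dir :: "phpt \<Rightarrow> complex" where
  "dir x = tng x * cis (snd (snd x))"

text \<open>y is the next collision of x: straight motion, then specular reflection.\<close>
definition hit :: "real \<Rightarrow> real \<Rightarrow> phpt \<Rightarrow> phpt \<Rightarrow> bool" where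
  "hit ps R x y \<longleftrightarrow> y \<in> M ps R \<and>
     (\<exists>t>0. pos ps R y = pos ps R x + complex_of_real t * dir x) \<and>
     cis (snd (snd y)) = cnj (dir x / tng y)"

definition bmap :: "real \<Rightarrow> real \<Rightarrow> phpt \<Rightarrow> phpt option" where
  "bmap ps R x = (if x \<in> M ps R \<and> (\<exists>!y. hit ps R x y) then Some (THE y. hit ps R x y) else None)"

primrec biter :: "real \<Rightarrow> real \<Rightarrow> nat \<Rightarrow> phpt \<Rightarrow> phpt option" where
  "biter ps R 0 x = Some x"
| "biter ps R (Suc n) x = Option.bind (biter ps R n x) (bmap ps R)"

definition Mr_in :: "real \<Rightarrow> real \<Rightarrow> phpt set" where
  "Mr_in ps R = {y \<in> Mr ps R. \<exists>x \<in> MR ps R. bmap ps R x = Some y}"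

definition Mr_out :: "real \<Rightarrow> real \<Rightarrow> phpt set" where
  "Mr_out ps R = {x \<in> Mr ps R. \<exists>y \<in> MR ps R. bmap ps R x = Some y}"

definition MR_out :: "real \<Rightarrow> real \<Rightarrow> phpt set" where
  "MR_out ps R = {x \<in> MR ps R. \<exists>y \<in> Mr ps R. bmap ps R x = Some y}"

definition Vset :: "real \<Rightarrow> real \<Rightarrow> real \<Rightarrow> phpt set" where
  "Vset ps R d = {x \<in> Mr_out ps R. snd x \<in> ball (2*pi - ps, ps) d \<union> ball (ps, pi - ps) d}"

definition Uset :: "real \<Rightarrow> real \<Rightarrow> real \<Rightarrow> phpt set" where
  "Uset ps R d = {x \<in> Mr_in ps R. snd x \<in> ball (2*pi - ps, pi - ps) d \<union> ball (ps, ps) d}"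

end

theory Submission
  imports Defs
begin

text \<open>Put \<open>c = |O\<^sub>r O\<^sub>R|\<close>, so that \<open>R\<^sup>2 = c\<^sup>2 + 2 c cos \<phi>\<^sub>* + 1\<close>. A chord meeting
  \<open>\<Gamma>\<^sub>R\<close> at angle \<open>\<theta>\<close> lies at distance \<open>R |cos \<theta>|\<close> from \<open>O\<^sub>R\<close>, so if \<open>d = R sin \<theta> < 2\<close>
  its endpoint on \<open>\<Gamma>\<^sub>r\<close>, at position angle \<open>\<phi>\<close>, satisfies \<open>c\<^sup>2 + 2 c cos \<phi> + 1 > R\<^sup>2 - 4\<close>,
  i.e. \<open>cos \<phi> > cos \<phi>\<^sub>* - 2/c\<close>: the endpoint is within \<open>O(1/(c sin \<phi>\<^sub>*))\<close> of a corner.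
  At the same time \<open>\<theta>\<close> is within \<open>O(1/R)\<close> of \<open>0\<close> or \<open>\<pi>\<close> and the position on \<open>\<Gamma>\<^sub>R\<close> is
  \<open>O(1/R)\<close>, so the reflection law \<open>\<theta>\<^sub>0 \<equiv> \<Phi> - \<theta>\<^sub>1 - \<phi>\<^sub>0 (mod 2\<pi>)\<close> pins \<open>\<theta>\<^sub>0\<close> near
  \<open>\<pi> - \<phi>\<^sub>*\<close> or \<open>\<phi>\<^sub>*\<close>; the two other combinations would force \<open>\<theta>\<^sub>0 \<notin> (0, \<pi>)\<close>. The
  hypotheses on \<open>R\<close> make all errors fit into \<open>\<delta>\<^sub>*\<close>. Along \<open>\<Gamma>\<^sub>R\<close> the angle \<open>\<theta>\<close> is invariant,
  so \<open>d\<^sub>1 < 2\<close> persists up to the return to \<open>\<Gamma>\<^sub>r\<close>, and the reflection \<open>\<phi> \<mapsto> 2\<pi> - \<phi>\<close>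
  turns the entry point \<open>x\<^sub>2\<close> into the same picture.\<close>

lemma sin_gt_half_self:
  fixes x :: real assumes "0 < x" "x \<le> 1" shows "x / 2 < sin x"
proof -
  have "\<bar>sin x - (\<Sum>m<3. sin_coeff m * x ^ m)\<bar> \<le> inverse (fact 3) * \<bar>x\<bar> ^ 3"
    by (rule Maclaurin_sin_bound)
  moreover have "(\<Sum>m<3. sin_coeff m * x ^ m) = x"
    by (simp add: numeral_3_eq_3 sin_coeff_def)
  ultimately have "x - x ^ 3 / 6 \<le> sin x"
    using assms by (simp add: fact_numeral abs_if split: if_splits)
  moreover have "x ^ 3 \<le> x"
    using assms by (simp add: power3_eq_cube mult_le_one)
  ultimately show ?thesis using assms by linarith
qed

lemma less_of_sin_le_half:
  fixes t b :: real
  assumes "0 < b" "b \<le> 1" "0 \<le> t" "t \<le> pi / 2" "sin t \<le> b / 2"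
  shows "t < b"
proof (rule ccontr)
  assume "\<not> t < b"
  hence "sin b \<le> sin t" using assms pi_ge_two by (subst sin_mono_le_eq) auto
  thus False using sin_gt_half_self[OF assms(1,2)] assms by linarith
qed

lemma near_0_or_pi_of_sin_le_half:
  fixes t b :: real
  assumes "0 < b" "b \<le> 1" "0 < t" "t < pi" "sin t \<le> b / 2"
  shows "t < b \<or> pi - t < b"
proof (cases "t \<le> pi / 2")
  case True
  thus ?thesis using less_of_sin_le_half[OF assms(1,2)] assms by simp
next
  case False
  thus ?thesis using less_of_sin_le_half[OF assms(1,2), of "pi - t"] assms by simp
qed

lemma near_ps_of_cos_gt:
  fixes ps a phi :: real
  assumes "0 < ps" "ps < pi / 2" "0 < a" "a \<le> 1" "ps + a \<le> pi"
    and "ps \<le> phi" "phi \<le> 2 * pi - ps" "cos ps - sin ps * (a / 2) < cos phi"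
  shows "phi < ps + a \<or> 2 * pi - ps - a < phi"
proof (rule ccontr)
  assume far: "\<not> ?thesis"
  define p where "p = (if phi \<le> pi then phi else 2 * pi - phi)"
  have "cos p = cos phi" unfolding p_def by (simp add: cos_diff)
  have "ps + a \<le> p" "p \<le> pi" using far assms unfolding p_def by auto
  hence "cos p \<le> cos (ps + a)" using assms by (subst cos_mono_le_eq) auto
  also have "\<dots> = cos ps * cos a - sin ps * sin a" by (simp add: cos_add)
  also have "\<dots> \<le> cos ps - sin ps * sin a"
    using assms cos_ge_zero[of ps] cos_le_one[of a] by (simp add: mult_left_le)
  also have "\<dots> < cos ps - sin ps * (a / 2)"
    using sin_gt_half_self[OF assms(3,4)] sin_gt_zero[of ps] assms by simp
  finally show False using \<open>cos p = cos phi\<close> assms by linarith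
qed

lemma int_eq_0_of_abs_two_pi_mult_less:
  fixes j :: int assumes "\<bar>2 * pi * of_int j\<bar> < 2 * pi" shows "j = 0"
proof -
  have "\<bar>of_int j\<bar> < (1 :: real)" using assms by (simp add: abs_mult)
  thus ?thesis by linarith
qed

lemma no_int_two_pi_mult_between:
  fixes j :: int shows "\<not> (0 < 2 * pi * of_int j \<and> 2 * pi * of_int j < 2 * pi)"
proof
  assume "0 < 2 * pi * of_int j \<and> 2 * pi * of_int j < 2 * pi"
  hence "0 < j" "j < 1" by (simp_all add: zero_less_mult_iff)
  thus False by simp
qed

lemma mem_ball_Pair_of_abs_le:
  fixes x y p q d :: real
  assumes "0 < d" "\<bar>x - p\<bar> \<le> 32/100 * d" "\<bar>y - q\<bar> \<le> 74/100 * d"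
  shows "(x, y) \<in> ball (p, q) d"
proof -
  have "(x - p)\<^sup>2 \<le> (32/100 * d)\<^sup>2" "(y - q)\<^sup>2 \<le> (74/100 * d)\<^sup>2"
    using power_mono[OF assms(2) abs_ge_zero, of 2] power_mono[OF assms(3) abs_ge_zero, of 2]
    by simp_all
  moreover have "(32/100 * d)\<^sup>2 + (74/100 * d)\<^sup>2 < d\<^sup>2"
    using assms by (simp add: power2_eq_square)
  ultimately have "(p - x)\<^sup>2 + (q - y)\<^sup>2 < d\<^sup>2"
    by (simp add: power2_commute)
  thus ?thesis
    using assms by (simp add: mem_ball dist_Pair_Pair dist_real_def real_sqrt_less_iff real_less_lsqrt)
qed

lemma corner_angles_mem_balls:
  fixes ps dl phi th psi th' :: real and k :: int
  assumes dl: "0 < dl" "dl \<le> ps" "dl \<le> pi / 2 - ps"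
    and phi: "\<bar>phi - ps\<bar> \<le> 32/100 * dl \<or> \<bar>phi - (2 * pi - ps)\<bar> \<le> 32/100 * dl"
    and th': "th' \<le> 28/100 * dl \<or> pi - th' \<le> 28/100 * dl" "0 < th'" "th' < pi"
    and psi: "\<bar>psi\<bar> \<le> 14/100 * dl"
    and th: "0 < th" "th < pi" "th = psi - th' - phi + 2 * pi * of_int k"
  shows "(phi, th) \<in> ball (2 * pi - ps, ps) dl \<union> ball (ps, pi - ps) dl"
proof -
  have k1: "2 * pi * of_int (k - 1) = 2 * pi * of_int k - 2 * pi"
    by (simp add: algebra_simps)
  note bounds = dl th'(2,3) psi[unfolded abs_le_iff] th pi_gt3
  from phi th'(1) show ?thesis
  proof (elim disjE)
    assume "\<bar>phi - ps\<bar> \<le> 32/100 * dl" "th' \<le> 28/100 * dl"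
    hence "0 < 2 * pi * of_int k \<and> 2 * pi * of_int k < 2 * pi"
      using bounds unfolding abs_le_iff by linarith
    thus ?thesis using no_int_two_pi_mult_between by blast
  next
    assume phi: "\<bar>phi - ps\<bar> \<le> 32/100 * dl" and th': "pi - th' \<le> 28/100 * dl"
    have "\<bar>2 * pi * of_int (k - 1)\<bar> < 2 * pi"
      using bounds phi th' unfolding k1 abs_le_iff abs_less_iff by linarith
    hence "k - 1 = 0" by (rule int_eq_0_of_abs_two_pi_mult_less)
    hence "th - (pi - ps) = psi + (pi - th') - (phi - ps)" using th by simp
    hence "\<bar>th - (pi - ps)\<bar> \<le> 74/100 * dl"
      using bounds phi th' unfolding abs_le_iff by linarith
    thus ?thesis using mem_ball_Pair_of_abs_le[OF dl(1) phi] by simp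
  next
    assume phi: "\<bar>phi - (2 * pi - ps)\<bar> \<le> 32/100 * dl" and th': "th' \<le> 28/100 * dl"
    have "\<bar>2 * pi * of_int (k - 1)\<bar> < 2 * pi"
      using bounds phi th' unfolding k1 abs_le_iff abs_less_iff by linarith
    hence "k - 1 = 0" by (rule int_eq_0_of_abs_two_pi_mult_less)
    hence "th - ps = psi - th' - (phi - (2 * pi - ps))" using th by simp
    hence "\<bar>th - ps\<bar> \<le> 74/100 * dl"
      using bounds phi th' unfolding abs_le_iff by linarith
    thus ?thesis using mem_ball_Pair_of_abs_le[OF dl(1) phi] by simp
  next
    assume "\<bar>phi - (2 * pi - ps)\<bar> \<le> 32/100 * dl" "pi - th' \<le> 28/100 * dl"
    hence "0 < 2 * pi * of_int (k - 1) \<and> 2 * pi * of_int (k - 1) < 2 * pi"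
      using bounds unfolding k1 abs_le_iff by linarith
    thus ?thesis using no_int_two_pi_mult_between by blast
  qed
qed

lemma cis_eq_imp_2pi_multiple:
  assumes "cis a = cis b" shows "\<exists>k::int. a = b + 2 * pi * of_int k"
proof -
  have "sin a = sin b \<and> cos a = cos b"
    using arg_cong[OF assms, of Re] arg_cong[OF assms, of Im] by simp
  thus ?thesis by (simp add: sin_cos_eq_iff)
qed

lemma bmap_Some_imp_hit: "bmap ps R x = Some y \<Longrightarrow> hit ps R x y"
  unfolding bmap_def by (auto split: if_splits intro: theI')

text \<open>Reflection law: a chord from \<open>(p, theta)\<close> to \<open>(p', theta')\<close> has direction
  \<open>\<i> * cis (p + theta) = \<i> * cis (p' - theta')\<close>.\<close>
lemma hit_dir_eq:
  assumes "hit ps R x y" shows "dir x = \<i> * cis (fst (snd y) - snd (snd y))"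
proof -
  have "cis (snd (snd y)) = cnj (dir x / tng y)" using assms unfolding hit_def by simp
  hence "cis (- snd (snd y)) = dir x / tng y" by (metis cis_cnj complex_cnj_cnj)
  thus ?thesis unfolding tng_def by (simp add: field_simps cis_mult)
qed

lemma hit_theta_eq:
  assumes "hit ps R x y"
  shows "\<exists>k::int. snd (snd x) = fst (snd y) - snd (snd y) - fst (snd x) + 2 * pi * of_int k"
proof -
  have "cis (fst (snd x) + snd (snd x)) = cis (fst (snd y) - snd (snd y))"
    using hit_dir_eq[OF assms] unfolding dir_def tng_def by (simp add: cis_mult)
  then obtain k :: int
    where "fst (snd x) + snd (snd x) = fst (snd y) - snd (snd y) + 2 * pi * of_int k"
    using cis_eq_imp_2pi_multiple by blast
  thus ?thesis by (intro exI[of _ k]) simp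
qed

text \<open>The line through \<open>R * cis p\<close> at angle theta to the tangent stays at distance
  \<open>R * \<bar>cos theta\<bar>\<close> from the origin.\<close>
lemma norm_chord_point_ge:
  fixes R p s theta :: real
  shows "R\<^sup>2 - (R * sin theta)\<^sup>2 \<le> (cmod (R * cis p + s * (\<i> * cis (p - theta))))\<^sup>2"
proof -
  have "R * cis p + s * (\<i> * cis (p - theta)) = cis p * Complex (R + s * sin theta) (s * cos theta)"
    by (simp add: complex_eq_iff cis.code algebra_simps sin_diff cos_diff)
  hence "(cmod (R * cis p + s * (\<i> * cis (p - theta))))\<^sup>2
      = (R + s * sin theta)\<^sup>2 + (s * cos theta)\<^sup>2"
    by (simp add: norm_mult cmod_power2)
  also have "\<dots> = R\<^sup>2 - (R * sin theta)\<^sup>2 + (s + R * sin theta)\<^sup>2"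
    using sin_cos_squared_add[of theta] by algebra
  finally show ?thesis by simp
qed

lemma hit_to_ArcBig_norm_ge:
  assumes "hit ps R x (ArcBig, p, t)"
  shows "R\<^sup>2 - (R * sin t)\<^sup>2 \<le> (cmod (pos ps R x))\<^sup>2"
proof -
  obtain s :: real where "pos ps R (ArcBig, p, t) = pos ps R x + s * dir x"
    using assms unfolding hit_def by auto
  hence "pos ps R x = R * cis p + (- s) * (\<i> * cis (p - t))"
    using hit_dir_eq[OF assms] by simp
  thus ?thesis using norm_chord_point_ge[of R t p "- s"] by simp
qed

lemma hit_from_ArcBig_norm_ge:
  assumes "hit ps R (ArcBig, p, t) y"
  shows "R\<^sup>2 - (R * sin t)\<^sup>2 \<le> (cmod (pos ps R y))\<^sup>2"
proof -
  obtain s :: real where "pos ps R y = R * cis p + s * (\<i> * cis (p - (- t)))"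
    using assms unfolding hit_def dir_def tng_def by (auto simp: cis_mult)
  thus ?thesis using norm_chord_point_ge[of R "- t" p s] by simp
qed

lemma norm_pos_ArcSmall_sq:
  "(cmod (pos ps R (ArcSmall, p, t)))\<^sup>2 = (ctr ps R)\<^sup>2 + 2 * ctr ps R * cos p + 1"
proof -
  have "(ctr ps R + cos p)\<^sup>2 + (sin p)\<^sup>2 = (ctr ps R)\<^sup>2 + 2 * ctr ps R * cos p + 1"
    by (simp add: power2_eq_square algebra_simps)
  thus ?thesis by (simp add: cmod_power2)
qed

lemma hit_ArcBig_ArcBig_cos_eq:
  assumes "hit ps R (ArcBig, p, t) (ArcBig, p', t')" "R \<noteq> 0"
  shows "cos t' = cos t"
proof -
  define u where "u = p' - t'"
  obtain s :: real where "R * cis p' = R * cis p + s * (\<i> * cis u)"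
    using assms hit_dir_eq[OF assms(1)] unfolding hit_def u_def by auto
  \<comment> \<open>the component orthogonal to the chord is the same at both endpoints\<close>
  hence "Im (cnj (\<i> * cis u) * (R * cis p')) = Im (cnj (\<i> * cis u) * (R * cis p))"
    by (simp add: algebra_simps)
  moreover have "Im (cnj (\<i> * cis u) * (R * cis q)) = - R * cos (q - u)" for q
    by (simp add: cos_diff algebra_simps)
  ultimately have "R * cos (p' - u) = R * cos (p - u)" by simp
  moreover obtain k :: int where "t = u - p + 2 * pi * of_int k"
    using hit_theta_eq[OF assms(1)] u_def by auto
  ultimately have "cos t' = cos (- (t - 2 * pi * of_int k))"
    using assms(2) by (simp add: u_def)
  thus ?thesis by (simp add: cos_diff)
qed

lemma biter_add_None: "biter ps R m x = None \<Longrightarrow> biter ps R (m + j) x = None"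
  by (induction j) auto

lemma bmap_ArcBig_theta_eq:
  assumes "R \<noteq> 0" "w \<in> MR ps R" "w \<notin> MR_out ps R" "bmap ps R w = Some w'"
  shows "w' \<in> MR ps R \<and> snd (snd w') = snd (snd w)"
proof -
  have hit: "hit ps R w w'" using assms(4) by (rule bmap_Some_imp_hit)
  have "w' \<notin> Mr ps R" using assms(2-4) unfolding MR_out_def by auto
  hence w': "w' \<in> MR ps R" using hit unfolding hit_def M_def by simp
  obtain p t p' t' where eq: "w = (ArcBig, p, t)" "w' = (ArcBig, p', t')"
    using assms(2) w' unfolding MR_def by (metis (mono_tags) mem_Collect_eq prod.collapse)
  have "cos t' = cos t" using hit_ArcBig_ArcBig_cos_eq[of ps R p t p' t'] hit assms(1) eq by simp
  moreover have "0 < t" "t < pi" "0 < t'" "t' < pi"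
    using assms(2) w' eq unfolding MR_def by auto
  ultimately have "t' = t" using cos_inj_pi[of t' t] by linarith
  thus ?thesis using w' eq by simp
qed

lemma biter_ArcBig_theta_eq:
  assumes "R \<noteq> 0" "x \<in> MR ps R" "biter ps R (Suc n) x = Some y"
    and "\<forall>k<n. biter ps R k x \<notin> Some ` MR_out ps R"
  shows "\<exists>z. biter ps R n x = Some z \<and> z \<in> MR ps R \<and> snd (snd z) = snd (snd x)"
proof -
  have "\<exists>z. biter ps R k x = Some z \<and> z \<in> MR ps R \<and> snd (snd z) = snd (snd x)"
    if "k \<le> n" for k
    using that
  proof (induction k)
    case 0
    thus ?case using assms(2) by simp
  next
    case (Suc k)
    then obtain w where w: "biter ps R k x = Some w" "w \<in> MR ps R" "snd (snd w) = snd (snd x)"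
      by auto
    have "k < n" using Suc.prems by simp
    hence "w \<notin> MR_out ps R" using assms(4) w(1) by auto
    show ?case
    proof (cases "bmap ps R w")
      case None
      \<comment> \<open>then the orbit would stop before reaching y\<close>
      hence "biter ps R (Suc k + (n - k)) x = None" using w(1) by (intro biter_add_None) simp
      thus ?thesis using assms(3) Suc.prems by simp
    next
      case (Some w')
      thus ?thesis using bmap_ArcBig_theta_eq[OF assms(1) w(2) \<open>w \<notin> MR_out ps R\<close>] w by simp
    qed
  qed
  thus ?thesis by simp
qed

lemma mem_ball_reflect:
  fixes a x y p q d :: real
  shows "(a - x, y) \<in> ball (p, q) d \<longleftrightarrow> (x, y) \<in> ball (a - p, q) d"
proof -
  have "\<bar>p - (a - x)\<bar> = \<bar>(a - p) - x\<bar>" by linarith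
  thus ?thesis by (simp add: mem_ball dist_Pair_Pair dist_real_def)
qed

locale large_table =
  fixes ps R :: real
  assumes ps_pos: "0 < ps" and ps_less: "ps < pi / 2"
    and R_ge: "17 \<le> R"
    and R_large: "146/10 \<le> R * (min ps (pi / 2 - ps) * sin ps)"
begin

abbreviation delta :: real where "delta \<equiv> min ps (pi / 2 - ps)"

lemma delta_bounds: "0 < delta" "delta \<le> ps" "delta \<le> pi / 2 - ps" "delta < 1"
  using ps_pos ps_less pi_less_4 by auto

lemma sin_ps_bounds: "0 < sin ps" "sin ps \<le> 1" "sin ps < R"
proof -
  show "0 < sin ps" using ps_pos ps_less by (simp add: sin_gt_zero)
  show "sin ps \<le> 1" "sin ps < R" using sin_le_one[of ps] R_ge by linarith+
qed

lemma R_delta_large: "146/10 \<le> R * delta"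
proof -
  have "delta * sin ps \<le> delta"
    using mult_left_le[of "sin ps" delta] delta_bounds(1) sin_ps_bounds(2) by simp
  hence "R * (delta * sin ps) \<le> R * delta" using R_ge by (simp add: mult_left_mono)
  thus ?thesis using R_large by linarith
qed

lemma ctr_ge: "R - 2 \<le> ctr ps R"
proof -
  have "(R - 1)\<^sup>2 \<le> R\<^sup>2 - (sin ps)\<^sup>2"
    using R_ge sin_ps_bounds power_le_one[of "sin ps" 2] by (simp add: power2_eq_square algebra_simps)
  hence "R - 1 \<le> sqrt (R\<^sup>2 - (sin ps)\<^sup>2)" by (rule real_le_rsqrt)
  thus ?thesis unfolding ctr_def using cos_le_one[of ps] by linarith
qed

lemma R_sq_eq: "R\<^sup>2 = (ctr ps R)\<^sup>2 + 2 * ctr ps R * cos ps + 1"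
proof -
  have "(sin ps)\<^sup>2 \<le> R\<^sup>2"
    using sin_ps_bounds by (intro power_mono) auto
  hence "(ctr ps R + cos ps)\<^sup>2 = R\<^sup>2 - (sin ps)\<^sup>2" unfolding ctr_def by simp
  thus ?thesis
    by (simp add: power2_eq_square algebra_simps) (use sin_cos_squared_add3[of ps] in linarith)
qed

lemma PhiS_less: "PhiS ps R < 2 / R"
proof -
  have sR: "0 \<le> sin ps / R" "sin ps / R \<le> 1" using sin_ps_bounds by simp_all
  have "2 * sin ps \<le> R" using sin_ps_bounds R_ge by linarith
  hence b: "0 < 2 * sin ps / R" "2 * sin ps / R \<le> 1"
    using sin_ps_bounds(1) R_ge by (auto simp: divide_le_eq)
  have "0 \<le> PhiS ps R" "PhiS ps R \<le> pi / 2" "sin (PhiS ps R) \<le> 2 * sin ps / R / 2"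
    unfolding PhiS_def using sR arcsin_nonneg arcsin_bounded[of "sin ps / R"] by simp_all
  hence "PhiS ps R < 2 * sin ps / R" by (rule less_of_sin_le_half[OF b])
  also have "\<dots> \<le> 2 / R" using sin_ps_bounds R_ge by (simp add: divide_right_mono)
  finally show ?thesis .
qed

lemma position_near_corner:
  assumes "ps \<le> phi" "phi \<le> 2 * pi - ps"
    and "R\<^sup>2 - 4 < (ctr ps R)\<^sup>2 + 2 * ctr ps R * cos phi + 1"
  shows "\<bar>phi - ps\<bar> \<le> 32/100 * delta \<or> \<bar>phi - (2 * pi - ps)\<bar> \<le> 32/100 * delta"
proof -
  define c where "c = ctr ps R"
  define a where "a = 4 / (c * sin ps)"
  have c: "R - 2 \<le> c" "0 < c" using ctr_ge R_ge c_def by auto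
  have "126/10 \<le> delta * c * sin ps"
  proof -
    have "delta * (R - 2) * sin ps \<le> delta * c * sin ps"
      using c delta_bounds sin_ps_bounds by (simp add: mult_right_mono)
    moreover have "delta * sin ps \<le> 1"
      using delta_bounds sin_ps_bounds by (simp add: mult_le_one)
    ultimately show ?thesis using R_large by (simp add: algebra_simps)
  qed
  hence a: "0 < a" "a \<le> 32/100 * delta"
    using c delta_bounds sin_ps_bounds unfolding a_def by (simp_all add: divide_le_eq algebra_simps)
  have "cos ps - sin ps * (a / 2) < cos phi"
  proof -
    have "c * (cos ps - cos phi) < 2" using assms(3) R_sq_eq c_def by (simp add: algebra_simps)
    hence "cos ps - cos phi < 2 / c" using c by (simp add: less_divide_eq mult.commute)
    moreover have "sin ps * (a / 2) = 2 / c" using sin_ps_bounds c unfolding a_def by simp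
    ultimately show ?thesis by simp
  qed
  hence "phi < ps + a \<or> 2 * pi - ps - a < phi"
    using near_ps_of_cos_gt[OF ps_pos ps_less a(1) _ _ assms(1,2)] a delta_bounds by simp
  thus ?thesis using a assms by auto
qed

lemma theta_near_0_or_pi:
  assumes "0 < t" "t < pi" "R * sin t < 2"
  shows "t \<le> 28/100 * delta \<or> pi - t \<le> 28/100 * delta"
proof -
  have "4 / R \<le> 28/100 * delta" using R_delta_large R_ge by (simp add: divide_le_eq algebra_simps)
  moreover have "t < 4 / R \<or> pi - t < 4 / R"
    using assms R_ge by (intro near_0_or_pi_of_sin_le_half) (simp_all add: field_simps)
  ultimately show ?thesis by linarith
qed

lemma ArcBig_position_small:
  assumes "- PhiS ps R < p" "p < PhiS ps R" shows "\<bar>p\<bar> \<le> 14/100 * delta"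
proof -
  have "2 / R \<le> 14/100 * delta" using R_delta_large R_ge by (simp add: divide_le_eq algebra_simps)
  thus ?thesis using assms PhiS_less by linarith
qed

lemma ArcSmall_norm_sq_gt:
  assumes "R\<^sup>2 - (R * sin t)\<^sup>2 \<le> (cmod (pos ps R (ArcSmall, p, th)))\<^sup>2" "0 < t" "t < pi" "R * sin t < 2"
  shows "R\<^sup>2 - 4 < (ctr ps R)\<^sup>2 + 2 * ctr ps R * cos p + 1"
proof -
  have "0 < R * sin t" using assms R_ge sin_gt_zero by simp
  hence "(R * sin t)\<^sup>2 < 2\<^sup>2" using assms by (intro power_strict_mono) auto
  thus ?thesis using assms(1) norm_pos_ArcSmall_sq by simp
qed

lemma exit_angles_mem_balls:
  assumes "x \<in> Mr ps R" "y \<in> MR ps R" "hit ps R x y" "R * sin (snd (snd y)) < 2"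
  shows "snd x \<in> ball (2 * pi - ps, ps) delta \<union> ball (ps, pi - ps) delta"
proof -
  obtain p0 t0 p1 t1 where xy: "x = (ArcSmall, p0, t0)" "y = (ArcBig, p1, t1)"
    using assms(1,2) unfolding Mr_def MR_def by (metis (mono_tags) mem_Collect_eq prod.collapse)
  have x: "ps \<le> p0" "p0 \<le> 2 * pi - ps" "0 < t0" "t0 < pi"
    and y: "- PhiS ps R < p1" "p1 < PhiS ps R" "0 < t1" "t1 < pi"
    using assms(1,2) xy unfolding Mr_def MR_def by auto
  have d1: "R * sin t1 < 2" using assms(4) xy by simp
  have "R\<^sup>2 - (R * sin t1)\<^sup>2 \<le> (cmod (pos ps R (ArcSmall, p0, t0)))\<^sup>2"
    using hit_to_ArcBig_norm_ge assms(3) xy by blast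
  hence "R\<^sup>2 - 4 < (ctr ps R)\<^sup>2 + 2 * ctr ps R * cos p0 + 1"
    using ArcSmall_norm_sq_gt y(3,4) d1 by blast
  moreover obtain k :: int where "t0 = p1 - t1 - p0 + 2 * pi * of_int k"
    using hit_theta_eq[OF assms(3)] xy by auto
  ultimately have "(p0, t0) \<in> ball (2 * pi - ps, ps) delta \<union> ball (ps, pi - ps) delta"
    by (intro corner_angles_mem_balls[OF delta_bounds(1-3) position_near_corner[OF x(1,2)]
        theta_near_0_or_pi[OF y(3,4) d1] y(3,4) ArcBig_position_small[OF y(1,2)] x(3,4)])
  thus ?thesis using xy by simp
qed

lemma entry_angles_mem_balls:
  assumes "z \<in> MR ps R" "x \<in> Mr ps R" "hit ps R z x" "R * sin (snd (snd z)) < 2"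
  shows "snd x \<in> ball (2 * pi - ps, pi - ps) delta \<union> ball (ps, ps) delta"
proof -
  obtain pz tz p2 t2 where zx: "z = (ArcBig, pz, tz)" "x = (ArcSmall, p2, t2)"
    using assms(1,2) unfolding Mr_def MR_def by (metis (mono_tags) mem_Collect_eq prod.collapse)
  have z: "- PhiS ps R < - pz" "- pz < PhiS ps R" "0 < tz" "tz < pi"
    and x: "ps \<le> 2 * pi - p2" "2 * pi - p2 \<le> 2 * pi - ps" "0 < t2" "t2 < pi"
    using assms(1,2) zx unfolding Mr_def MR_def by auto
  \<comment> \<open>the mirror image phi \<mapsto> 2 pi - phi of the entry point looks like an exit point\<close>
  have dz: "R * sin tz < 2" using assms(4) zx by simp
  have "R\<^sup>2 - (R * sin tz)\<^sup>2 \<le> (cmod (pos ps R (ArcSmall, p2, t2)))\<^sup>2"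
    using hit_from_ArcBig_norm_ge assms(3) zx by blast
  hence "R\<^sup>2 - 4 < (ctr ps R)\<^sup>2 + 2 * ctr ps R * cos p2 + 1"
    using ArcSmall_norm_sq_gt z(3,4) dz by blast
  hence "R\<^sup>2 - 4 < (ctr ps R)\<^sup>2 + 2 * ctr ps R * cos (2 * pi - p2) + 1" by simp
  moreover obtain k :: int where "tz = p2 - t2 - pz + 2 * pi * of_int k"
    using hit_theta_eq[OF assms(3)] zx by auto
  hence "t2 = - pz - tz - (2 * pi - p2) + 2 * pi * of_int (k + 1)" by (simp add: algebra_simps)
  ultimately have "(2 * pi - p2, t2) \<in> ball (2 * pi - ps, ps) delta \<union> ball (ps, pi - ps) delta"
    by (intro corner_angles_mem_balls[OF delta_bounds(1-3) position_near_corner[OF x(1,2)]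
        theta_near_0_or_pi[OF z(3,4) dz] z(3,4) ArcBig_position_small[OF z(1,2)] x(3,4)])
  hence "(p2, t2) \<in> ball (2 * pi - (2 * pi - ps), ps) delta \<union> ball (2 * pi - ps, pi - ps) delta"
    unfolding Un_iff mem_ball_reflect .
  thus ?thesis using zx by (auto simp del: mem_ball)
qed

end

lemma large_tableI:
  assumes "0 < ps" "ps < pi / 2"
    and "R \<ge> max (34 / ps) ((146 / 10) / (min ps (pi / 2 - ps) * sin ps))"
  shows "large_table ps R"
proof
  have "17 < 34 / ps" using assms(1,2) pi_less_4 by (simp add: less_divide_eq)
  thus "17 \<le> R" using assms(3) by linarith
  have "0 < min ps (pi / 2 - ps) * sin ps" using assms(1,2) by (simp add: sin_gt_zero)
  thus "146/10 \<le> R * (min ps (pi / 2 - ps) * sin ps)"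
    using assms(3) by (simp add: pos_divide_le_eq)
qed (use assms(1,2) in simp_all)

theorem mainTheorem3:
  fixes ps R :: real and x x0 x1 x2 :: phpt and n0 n1 :: nat
  assumes "0 < ps" and "ps < pi / 2"
    and "R \<ge> max (34 / ps) ((146 / 10) / (min ps (pi / 2 - ps) * sin ps))"
    and "x \<in> Mr ps R"
    and "\<exists>n. biter ps R n x \<in> Some ` Mr_out ps R"
    and "n0 = (LEAST n. biter ps R n x \<in> Some ` Mr_out ps R)"
    and "biter ps R n0 x = Some x0"
    and "bmap ps R x0 = Some x1"
    and "\<exists>n. biter ps R n x1 \<in> Some ` MR_out ps R"
    and "n1 = (LEAST n. biter ps R n x1 \<in> Some ` MR_out ps R)"
    and "biter ps R (Suc n1) x1 = Some x2"
    and "R * sin (snd (snd x1)) < 2"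
  shows "x0 \<in> Vset ps R (min ps (pi / 2 - ps)) \<and> x2 \<in> Uset ps R (min ps (pi / 2 - ps))"
proof -
  interpret large_table ps R by (rule large_tableI[OF assms(1-3)])
  have "biter ps R n0 x \<in> Some ` Mr_out ps R"
    unfolding assms(6) by (rule LeastI_ex[OF assms(5)])
  hence x0: "x0 \<in> Mr_out ps R" using assms(7) by auto
  hence x0_Mr: "x0 \<in> Mr ps R" and x1: "x1 \<in> MR ps R"
    using assms(8) unfolding Mr_out_def by auto
  have "snd x0 \<in> ball (2 * pi - ps, ps) delta \<union> ball (ps, pi - ps) delta"
    by (rule exit_angles_mem_balls[OF x0_Mr x1 bmap_Some_imp_hit[OF assms(8)] assms(12)])
  hence V: "x0 \<in> Vset ps R delta" using x0 unfolding Vset_def by simp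
  have "\<forall>k<n1. biter ps R k x1 \<notin> Some ` MR_out ps R"
    unfolding assms(10) using not_less_Least by blast
  then obtain z where z: "biter ps R n1 x1 = Some z" "z \<in> MR ps R" "snd (snd z) = snd (snd x1)"
    using biter_ArcBig_theta_eq[OF _ x1 assms(11)] R_ge by force
  have "biter ps R n1 x1 \<in> Some ` MR_out ps R"
    unfolding assms(10) by (rule LeastI_ex[OF assms(9)])
  hence "z \<in> MR_out ps R" using z(1) by auto
  moreover have bz: "bmap ps R z = Some x2" using assms(11) z(1) by simp
  ultimately have x2: "x2 \<in> Mr_in ps R" using z(2) unfolding MR_out_def Mr_in_def by auto
  hence "x2 \<in> Mr ps R" unfolding Mr_in_def by simp
  hence "snd x2 \<in> ball (2 * pi - ps, pi - ps) delta \<union> ball (ps, ps) delta"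
    using entry_angles_mem_balls[OF z(2) _ bmap_Some_imp_hit[OF bz]] assms(12) z(3) by simp
  hence "x2 \<in> Uset ps R delta" using x2 unfolding Uset_def by simp
  with V show ?thesis by simp
qed

end
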